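(* Let $G=(V,E)$ be a graph with nonnegative edge lengths $l_e$, root $r$, and integer demands $d_v>0$ on a set of demand nodes, with total demand $D$. Fix $\epsilon>0$, $\gamma>1$, $\delta>1$, let $K=\lceil \log_{1+\epsilon} D\rceil$, $M_i=(1+\epsilon)^i$, $A_i(x)=\min\{x,M_i\}$, and let $T_i^*$ be an optimal routing tree for $A_i$ with rent cost $R_i^*$ and normalized buy cost $B_i^*$ ($0\le i\le K$). Run the following procedure: (1) for each $i$ let $T_i$ be a routing tree returned by an SSRoB approximation algorithm for cost function $A_i$; (2) for $i=1,\dots,K$ in increasing order, if $A_i(T_{i-1})<A_i(T_i)$ set $T_i\leftarrow T_{i-1}$; (3) for $i=K-1,\dots,0$ in decreasing order, if $A_i(T_{i+1})<A_i(T_i)$ set $T_i\leftarrow T_{i+1}$; (4) compute the rent cost $R_i$ and normalized buy cost $B_i$ of each resulting $T_i$; (5) set $L_B=\emptyset$, $B=\infty$, and for $i=0,\dots,K$ in increasing order, if $B_i<B/\gamma$ then add $i$ to $L_B$ and set $B\leftarrow B_i$; (6) set $L=\emptyset$, $R=\infty$, and for each $i\in L_B$ in decreasing order, if $R_i<R/\delta$ then add $i$ to $L$ and set $R\leftarrow R_i$. Suppose there exist a routing tree $T$ and constants $c_B,c_R$ such that for every $i\in L$ there is a partition of the edges of $T$ into two sets $T_{B_i}$ and $T_{R_i}$ with $A_0(T_{B_i})\le c_B B_i$ and $A_K(T_{R_i})\le c_R R_i$, and suppose that for all $i$, $R_i\le \mu_R R_i^*+\mu_B M_iB_i^*$ and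 $M_iB_i\le \nu_R R_i^*+\nu_B M_iB_i^*$. Then for all $k\in\{0,\dots,K\}$, $A_k(T)\le \max\{c_R\delta\mu_R+c_B\gamma\nu_R,\; c_R\delta\mu_B+c_B\gamma\nu_B\}\,A_k(T_k^* )$.
   Context: A routing tree is a tree in $G$ containing $r$ and all demand nodes; each demand node $v$ sends $d_v$ units of flow to $r$ along its unique tree path, and $x_e$ denotes the total flow on edge $e$. For a function $f$ and a routing tree $T$, $f(T)=\sum_{e\in T} l_e f(x_e)$; for a subset $S$ of edges of $T$, $f(S)=\sum_{e\in S} l_e f(x_e)$ with $x_e$ the flows in $T$. The single-sink rent-or-buy (SSRoB) problem with parameter $M$ is to find a routing tree minimizing $A(T)$ for $A(x)=\min\{x,M\}$. For a routing tree $T_i$ with flows $x_e$, its rent cost is $R_i=\sum_{e\in T_i,\,x_e<M_i} l_e A_i(x_e)$ and its normalized buy cost is $B_i=\sum_{e\in T_i,\,x_e\ge M_i} l_e$. *)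

theory Defs
  imports Complex_Main
begin

text \<open>Graphs: vertices of type 'a, edges are 2-element vertex sets.
  A subgraph (in particular a routing tree) is given by its edge set T.\<close>

definition walk_edges :: "'a list \<Rightarrow> 'a set set" where
  "walk_edges ps = {{ps ! j, ps ! Suc j} | j. Suc j < length ps}"

definition is_path :: "'a set set \<Rightarrow> 'a \<Rightarrow> 'a \<Rightarrow> 'a list \<Rightarrow> bool" where
  "is_path T u v ps \<longleftrightarrow> ps \<noteq> [] \<and> hd ps = u \<and> last ps = v \<and> distinct ps \<and> walk_edges ps \<subseteq> T"

definition has_cycle :: "'a set set \<Rightarrow> bool" where
  "has_cycle T \<longleftrightarrow> (\<exists>ps. 3 \<le> length ps \<and> distinct ps \<and> walk_edges ps \<subseteq> T \<and> {last ps, hd ps} \<in> T)"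

definition tverts :: "'a \<Rightarrow> 'a set set \<Rightarrow> 'a set" where
  "tverts r T = insert r (\<Union>T)"

definition is_tree :: "'a \<Rightarrow> 'a set set \<Rightarrow> bool" where
  "is_tree r T \<longleftrightarrow> finite T \<and>
     (\<forall>u\<in>tverts r T. \<forall>v\<in>tverts r T. \<exists>ps. is_path T u v ps) \<and> \<not> has_cycle T"

definition routing_tree :: "'a set set \<Rightarrow> 'a \<Rightarrow> 'a set \<Rightarrow> 'a set set \<Rightarrow> bool" where
  "routing_tree E r Dem T \<longleftrightarrow> T \<subseteq> E \<and> is_tree r T \<and> Dem \<subseteq> tverts r T"

definition flow :: "'a set \<Rightarrow> ('a \<Rightarrow> nat) \<Rightarrow> 'a \<Rightarrow> 'a set set \<Rightarrow> 'a set \<Rightarrow> real" where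
  "flow Dem d r T e =
     (\<Sum>v\<in>Dem. if (\<exists>ps. is_path T v r ps \<and> e \<in> walk_edges ps) then real (d v) else 0)"

definition Acost :: "real \<Rightarrow> real \<Rightarrow> real" where
  "Acost M x = min x M"

text \<open>f(T) and f(S) for S a subset of the edges of T.\<close>
definition scost :: "'a set \<Rightarrow> ('a \<Rightarrow> nat) \<Rightarrow> 'a \<Rightarrow> ('a set \<Rightarrow> real) \<Rightarrow> (real \<Rightarrow> real)
    \<Rightarrow> 'a set set \<Rightarrow> 'a set set \<Rightarrow> real" where
  "scost Dem d r l f T S = (\<Sum>e\<in>S. l e * f (flow Dem d r T e))"

definition tcost :: "'a set \<Rightarrow> ('a \<Rightarrow> nat) \<Rightarrow> 'a \<Rightarrow> ('a set \<Rightarrow> real) \<Rightarrow> (real \<Rightarrow> real)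
    \<Rightarrow> 'a set set \<Rightarrow> real" where
  "tcost Dem d r l f T = scost Dem d r l f T T"

definition rent :: "'a set \<Rightarrow> ('a \<Rightarrow> nat) \<Rightarrow> 'a \<Rightarrow> ('a set \<Rightarrow> real) \<Rightarrow> real \<Rightarrow> 'a set set \<Rightarrow> real" where
  "rent Dem d r l M T = (\<Sum>e\<in>{e\<in>T. flow Dem d r T e < M}. l e * Acost M (flow Dem d r T e))"

definition buy :: "'a set \<Rightarrow> ('a \<Rightarrow> nat) \<Rightarrow> 'a \<Rightarrow> ('a set \<Rightarrow> real) \<Rightarrow> real \<Rightarrow> 'a set set \<Rightarrow> real" where
  "buy Dem d r l M T = (\<Sum>e\<in>{e\<in>T. M \<le> flow Dem d r T e}. l e)"

text \<open>Step 2: forward pass; c i T is A_i(T).\<close>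
fun fwd :: "(nat \<Rightarrow> 'b \<Rightarrow> real) \<Rightarrow> (nat \<Rightarrow> 'b) \<Rightarrow> nat \<Rightarrow> 'b" where
  "fwd c T0 0 = T0 0"
| "fwd c T0 (Suc i) =
     (if c (Suc i) (fwd c T0 i) < c (Suc i) (T0 (Suc i)) then fwd c T0 i else T0 (Suc i))"

text \<open>Step 3: backward pass; bwd c F K j is the final tree of index K - j.\<close>
fun bwd :: "(nat \<Rightarrow> 'b \<Rightarrow> real) \<Rightarrow> (nat \<Rightarrow> 'b) \<Rightarrow> nat \<Rightarrow> nat \<Rightarrow> 'b" where
  "bwd c F K 0 = F K"
| "bwd c F K (Suc j) =
     (let i = K - Suc j in if c i (bwd c F K j) < c i (F i) then bwd c F K j else F i)"

definition final_trees :: "(nat \<Rightarrow> 'b \<Rightarrow> real) \<Rightarrow> (nat \<Rightarrow> 'b) \<Rightarrow> nat \<Rightarrow> nat \<Rightarrow> 'b" where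
  "final_trees c T0 K i = bwd c (fwd c T0) K (K - i)"

text \<open>Step 5: threshold None represents \<infinity>; after n steps indices 0..n-1 processed.\<close>
fun lb_scan :: "(nat \<Rightarrow> real) \<Rightarrow> real \<Rightarrow> nat \<Rightarrow> nat set \<times> real option" where
  "lb_scan Bv g 0 = ({}, None)"
| "lb_scan Bv g (Suc n) =
     (case lb_scan Bv g n of (S, b) \<Rightarrow>
        if (case b of None \<Rightarrow> True | Some bb \<Rightarrow> Bv n < bb / g)
        then (insert n S, Some (Bv n)) else (S, b))"

definition LB_set :: "(nat \<Rightarrow> real) \<Rightarrow> real \<Rightarrow> nat \<Rightarrow> nat set" where
  "LB_set Bv g K = fst (lb_scan Bv g (Suc K))"

text \<open>Step 6: indices K, K-1, ..., 0 processed in this order, only those in LB.\<close>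
fun l_scan :: "nat set \<Rightarrow> (nat \<Rightarrow> real) \<Rightarrow> real \<Rightarrow> nat \<Rightarrow> nat \<Rightarrow> nat set \<times> real option" where
  "l_scan LB Rv dl K 0 = ({}, None)"
| "l_scan LB Rv dl K (Suc j) =
     (case l_scan LB Rv dl K j of (S, b) \<Rightarrow>
        if K - j \<in> LB \<and> (case b of None \<Rightarrow> True | Some bb \<Rightarrow> Rv (K - j) < bb / dl)
        then (insert (K - j) S, Some (Rv (K - j))) else (S, b))"

definition L_set :: "nat set \<Rightarrow> (nat \<Rightarrow> real) \<Rightarrow> real \<Rightarrow> nat \<Rightarrow> nat set" where
  "L_set LB Rv dl K = fst (l_scan LB Rv dl K (Suc K))"

definition Kof :: "'a set \<Rightarrow> ('a \<Rightarrow> nat) \<Rightarrow> real \<Rightarrow> nat" where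
  "Kof Dem d eps = nat \<lceil>log (1 + eps) (real (\<Sum>v\<in>Dem. d v))\<rceil>"

definition Mof :: "real \<Rightarrow> nat \<Rightarrow> real" where
  "Mof eps i = (1 + eps) ^ i"

definition costA :: "'a set \<Rightarrow> ('a \<Rightarrow> nat) \<Rightarrow> 'a \<Rightarrow> ('a set \<Rightarrow> real) \<Rightarrow> real
    \<Rightarrow> nat \<Rightarrow> 'a set set \<Rightarrow> real" where
  "costA Dem d r l eps i S = tcost Dem d r l (Acost (Mof eps i)) S"

text \<open>Trees T_i after steps (1)-(3), given the algorithm outputs T0.\<close>
definition proc_trees :: "'a set \<Rightarrow> ('a \<Rightarrow> nat) \<Rightarrow> 'a \<Rightarrow> ('a set \<Rightarrow> real) \<Rightarrow> real
    \<Rightarrow> (nat \<Rightarrow> 'a set set) \<Rightarrow> nat \<Rightarrow> 'a set set" where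
  "proc_trees Dem d r l eps T0 = final_trees (costA Dem d r l eps) T0 (Kof Dem d eps)"

end

theory Submission
  imports Defs
begin

text \<open>
  The two passes leave consecutive trees mutually no worse at each other's thresholds:
  \<open>A\<^sub>i(T\<^sub>i) \<le> A\<^sub>i(T\<^sub>i\<^sub>+\<^sub>1)\<close> and \<open>A\<^sub>i\<^sub>+\<^sub>1(T\<^sub>i\<^sub>+\<^sub>1) \<le> A\<^sub>i\<^sub>+\<^sub>1(T\<^sub>i)\<close>.
  As a function of the threshold \<open>M\<close>, the cost \<open>A\<^sub>M(T) = R + M B\<close> grows on \<open>[M\<^sub>1, M\<^sub>2]\<close> at a rate
  between its buy costs at \<open>M\<^sub>2\<close> and at \<open>M\<^sub>1\<close>; comparing these increments for \<open>T\<^sub>i\<close> and \<open>T\<^sub>i\<^sub>+\<^sub>1\<close>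
  shows that \<open>B\<^sub>i\<close> is nonincreasing and \<open>R\<^sub>i\<close> nondecreasing in \<open>i\<close>. Hence for every \<open>k\<close> the two scans
  select some \<open>i \<in> L\<close> with \<open>B\<^sub>i \<le> \<gamma> B\<^sub>k\<close> and \<open>R\<^sub>i \<le> \<delta> R\<^sub>k\<close>. The partition of \<open>T\<close> for this \<open>i\<close> gives
  \<open>A\<^sub>k(T) \<le> M\<^sub>k c\<^sub>B B\<^sub>i + c\<^sub>R R\<^sub>i\<close>, and the assumed bounds on \<open>R\<^sub>k\<close> and \<open>M\<^sub>k B\<^sub>k\<close> together with
  \<open>A\<^sub>k(T\<^sub>k\<^sup>*) = R\<^sub>k\<^sup>* + M\<^sub>k B\<^sub>k\<^sup>*\<close> finish the proof.
\<close>

definition capped_cost :: "('e \<Rightarrow> real) \<Rightarrow> ('e \<Rightarrow> real) \<Rightarrow> real \<Rightarrow> 'e set \<Rightarrow> real" where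
  "capped_cost l x M S = (\<Sum>e\<in>S. l e * min (x e) M)"

definition rent_cost :: "('e \<Rightarrow> real) \<Rightarrow> ('e \<Rightarrow> real) \<Rightarrow> real \<Rightarrow> 'e set \<Rightarrow> real" where
  "rent_cost l x M S = (\<Sum>e\<in>{e\<in>S. x e < M}. l e * x e)"

definition buy_cost :: "('e \<Rightarrow> real) \<Rightarrow> ('e \<Rightarrow> real) \<Rightarrow> real \<Rightarrow> 'e set \<Rightarrow> real" where
  "buy_cost l x M S = (\<Sum>e\<in>{e\<in>S. M \<le> x e}. l e)"

lemma rent_cost_nonneg:
  "\<forall>e\<in>S. 0 \<le> l e \<Longrightarrow> \<forall>e\<in>S. 0 \<le> x e \<Longrightarrow> 0 \<le> rent_cost l x M S"
  unfolding rent_cost_def by (intro sum_nonneg) auto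

lemma buy_cost_nonneg: "\<forall>e\<in>S. 0 \<le> l e \<Longrightarrow> 0 \<le> buy_cost l x M S"
  unfolding buy_cost_def by (intro sum_nonneg) auto

lemma capped_cost_split:
  assumes "finite S"
  shows "capped_cost l x M S = rent_cost l x M S + M * buy_cost l x M S"
  unfolding capped_cost_def rent_cost_def buy_cost_def sum.inter_filter[OF assms]
    sum_distrib_left sum.distrib[symmetric]
  by (rule sum.cong) (auto simp: min_def)

lemma capped_cost_le_rent_buy_cost:
  assumes "finite S" "\<forall>e\<in>S. 0 \<le> l e"
  shows "capped_cost l x M' S \<le> rent_cost l x M S + M' * buy_cost l x M S"
  unfolding capped_cost_def rent_cost_def buy_cost_def sum.inter_filter[OF assms(1)]
    sum_distrib_left sum.distrib[symmetric]
proof (rule sum_mono)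
  fix e assume "e \<in> S"
  have "l e * min (x e) M' \<le> l e * (if x e < M then x e else M')"
    using assms(2) \<open>e \<in> S\<close> by (intro mult_left_mono) auto
  then show "l e * min (x e) M' \<le> (if x e < M then l e * x e else 0) + M' * (if M \<le> x e then l e else 0)"
    by (auto simp: mult.commute)
qed

lemma min_increment_bounds:
  fixes t M1 M2 :: real
  assumes "M1 \<le> M2"
  shows "(M2 - M1) * of_bool (M2 \<le> t) \<le> min t M2 - min t M1"
    and "min t M2 - min t M1 \<le> (M2 - M1) * of_bool (M1 \<le> t)"
  using assms by (auto simp: min_def)

lemma capped_cost_increment_bounds:
  assumes "finite S" "\<forall>e\<in>S. 0 \<le> l e" "M1 \<le> M2"
  shows "(M2 - M1) * buy_cost l x M2 S \<le> capped_cost l x M2 S - capped_cost l x M1 S"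
    and "capped_cost l x M2 S - capped_cost l x M1 S \<le> (M2 - M1) * buy_cost l x M1 S"
proof -
  have buy: "(M2 - M1) * buy_cost l x M S = (\<Sum>e\<in>S. l e * ((M2 - M1) * of_bool (M \<le> x e)))" for M
    unfolding buy_cost_def sum.inter_filter[OF assms(1)] sum_distrib_left
    by (rule sum.cong) auto
  have diff: "capped_cost l x M2 S - capped_cost l x M1 S = (\<Sum>e\<in>S. l e * (min (x e) M2 - min (x e) M1))"
    unfolding capped_cost_def sum_subtractf[symmetric] by (simp add: algebra_simps)
  show "(M2 - M1) * buy_cost l x M2 S \<le> capped_cost l x M2 S - capped_cost l x M1 S"
    unfolding buy diff using assms(2) min_increment_bounds(1)[OF assms(3)]
    by (intro sum_mono mult_left_mono) auto
  show "capped_cost l x M2 S - capped_cost l x M1 S \<le> (M2 - M1) * buy_cost l x M1 S"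
    unfolding buy diff using assms(2) min_increment_bounds(2)[OF assms(3)]
    by (intro sum_mono mult_left_mono) auto
qed

lemma rent_buy_exchange:
  assumes "finite S1" "finite S2" "\<forall>e\<in>S1. 0 \<le> l e" "\<forall>e\<in>S2. 0 \<le> l e" "0 \<le> M1" "M1 < M2"
    and "capped_cost l x1 M1 S1 \<le> capped_cost l x2 M1 S2"
    and "capped_cost l x2 M2 S2 \<le> capped_cost l x1 M2 S1"
  shows "buy_cost l x2 M2 S2 \<le> buy_cost l x1 M1 S1" and "rent_cost l x1 M1 S1 \<le> rent_cost l x2 M2 S2"
proof -
  have "(M2 - M1) * buy_cost l x2 M2 S2 \<le> capped_cost l x2 M2 S2 - capped_cost l x2 M1 S2"
    using capped_cost_increment_bounds(1)[OF assms(2,4)] assms(6) by simp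
  also have "\<dots> \<le> capped_cost l x1 M2 S1 - capped_cost l x1 M1 S1"
    using assms(7,8) by simp
  also have "\<dots> \<le> (M2 - M1) * buy_cost l x1 M1 S1"
    using capped_cost_increment_bounds(2)[OF assms(1,3)] assms(6) by simp
  finally show buy: "buy_cost l x2 M2 S2 \<le> buy_cost l x1 M1 S1"
    using assms(6) by simp
  have "rent_cost l x1 M1 S1 = capped_cost l x1 M1 S1 - M1 * buy_cost l x1 M1 S1"
    using capped_cost_split[OF assms(1)] by simp
  also have "\<dots> \<le> capped_cost l x2 M1 S2 - M1 * buy_cost l x2 M2 S2"
    using assms(7) mult_left_mono[OF buy assms(5)] by simp
  also have "\<dots> \<le> rent_cost l x2 M2 S2"
    using capped_cost_le_rent_buy_cost[OF assms(2,4), of x2 M1 M2] by simp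
  finally show "rent_cost l x1 M1 S1 \<le> rent_cost l x2 M2 S2" .
qed

lemma bwd_le: "c (K - j) (bwd c F K j) \<le> c (K - j) (F (K - j))"
  by (induction j) (auto simp: Let_def)

lemma final_trees_adjacent:
  assumes "i < K"
  shows "c i (final_trees c T0 K i) \<le> c i (final_trees c T0 K (Suc i))"
    and "c (Suc i) (final_trees c T0 K (Suc i)) \<le> c (Suc i) (final_trees c T0 K i)"
proof -
  define F where "F = fwd c T0"
  define j where "j = K - Suc i"
  have idx: "K - i = Suc j" "K - Suc j = i" "K - j = Suc i"
    using assms unfolding j_def by auto
  have step: "bwd c F K (Suc j) = (if c i (bwd c F K j) < c i (F i) then bwd c F K j else F i)"
    using idx(2) by (simp add: Let_def)
  have trees: "final_trees c T0 K i = bwd c F K (Suc j)" "final_trees c T0 K (Suc i) = bwd c F K j"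
    unfolding final_trees_def F_def idx(1) using idx(3) j_def by auto
  show "c i (final_trees c T0 K i) \<le> c i (final_trees c T0 K (Suc i))"
    unfolding trees step by auto
  have "c (Suc i) (bwd c F K j) \<le> c (Suc i) (F (Suc i))"
    using bwd_le[of c K j F] idx(3) by simp
  also have "\<dots> \<le> c (Suc i) (F i)"
    unfolding F_def by simp
  finally show "c (Suc i) (final_trees c T0 K (Suc i)) \<le> c (Suc i) (final_trees c T0 K i)"
    unfolding trees step by auto
qed

lemma fwd_in_range: "i \<le> K \<Longrightarrow> fwd c T0 i \<in> T0 ` {..K}"
  by (induction i) auto

lemma bwd_mem: "\<forall>m\<le>K. F m \<in> A \<Longrightarrow> bwd c F K j \<in> A"
  by (induction j) (auto simp: Let_def)

lemma final_trees_in_range: "final_trees c T0 K i \<in> T0 ` {..K}"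
  unfolding final_trees_def
  by (rule bwd_mem) (use fwd_in_range in blast)

lemma lb_scan_threshold:
  "snd (lb_scan Bv g n) = Some b \<Longrightarrow> \<exists>j\<in>fst (lb_scan Bv g n). j < n \<and> b = Bv j"
proof (induction n arbitrary: b)
  case (Suc n)
  obtain S c where Sc: "lb_scan Bv g n = (S, c)"
    by (cases "lb_scan Bv g n")
  show ?case
  proof (cases "case c of None \<Rightarrow> True | Some bb \<Rightarrow> Bv n < bb / g")
    case True
    then show ?thesis
      using Suc.prems Sc by simp
  next
    case False
    then have unchanged: "lb_scan Bv g (Suc n) = (S, c)"
      using Sc by simp
    then obtain j where "j \<in> S" "j < n" "b = Bv j"
      using Suc Sc by auto
    then show ?thesis
      unfolding unchanged by (intro bexI[of _ j]) auto
  qed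
qed simp

lemma lb_scan_covers:
  assumes "1 \<le> g" "0 \<le> Bv k" "k < n"
  shows "\<exists>j\<in>fst (lb_scan Bv g n). j \<le> k \<and> Bv j \<le> g * Bv k"
  using assms(3)
proof (induction n)
  case (Suc n)
  obtain S b where Sb: "lb_scan Bv g n = (S, b)"
    by (cases "lb_scan Bv g n")
  have S_sub: "S \<subseteq> fst (lb_scan Bv g (Suc n))"
    using Sb by auto
  show ?case
  proof (cases "k < n")
    case True
    then show ?thesis
      using Suc.IH Sb S_sub by auto
  next
    case False
    then have k: "k = n"
      using Suc.prems by simp
    show ?thesis
    proof (cases "case b of None \<Rightarrow> True | Some bb \<Rightarrow> Bv n < bb / g")
      case True
      then have "k \<in> fst (lb_scan Bv g (Suc n))"
        using Sb k by simp
      moreover have "Bv k \<le> g * Bv k"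
        using assms(1,2) mult_right_mono[of 1 g "Bv k"] by simp
      ultimately show ?thesis
        by blast
    next
      case False
      then obtain bb where b: "b = Some bb" "g * Bv n \<ge> bb"
        using assms(1) by (cases b) (auto simp: field_simps not_less)
      then obtain j where "j \<in> S" "j < n" "bb = Bv j"
        using lb_scan_threshold[of Bv g n bb] Sb by auto
      then show ?thesis
        using b k S_sub by (intro bexI[of _ j]) auto
    qed
  qed
qed simp

lemma l_scan_threshold:
  "snd (l_scan LB Rv dl K m) = Some b \<Longrightarrow>
     \<exists>i\<in>fst (l_scan LB Rv dl K m). K - m \<le> i \<and> i \<le> K \<and> b = Rv i"
proof (induction m arbitrary: b)
  case (Suc m)
  obtain S c where Sc: "l_scan LB Rv dl K m = (S, c)"
    by (cases "l_scan LB Rv dl K m")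
  show ?case
  proof (cases "K - m \<in> LB \<and> (case c of None \<Rightarrow> True | Some bb \<Rightarrow> Rv (K - m) < bb / dl)")
    case True
    then show ?thesis
      using Suc.prems Sc by (simp add: diff_le_mono2)
  next
    case False
    then have unchanged: "l_scan LB Rv dl K (Suc m) = (S, c)"
      using Sc by auto
    then obtain i where "i \<in> S" "K - m \<le> i" "i \<le> K" "b = Rv i"
      using Suc Sc by auto
    then show ?thesis
      unfolding unchanged by (intro bexI[of _ i]) auto
  qed
qed simp

lemma l_scan_covers:
  assumes "1 \<le> dl" "0 \<le> Rv j" "j \<in> LB" "j \<le> K" "K - j < m"
  shows "\<exists>i\<in>fst (l_scan LB Rv dl K m). j \<le> i \<and> i \<le> K \<and> Rv i \<le> dl * Rv j"
  using assms(5)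
proof (induction m)
  case (Suc m)
  obtain S b where Sb: "l_scan LB Rv dl K m = (S, b)"
    by (cases "l_scan LB Rv dl K m")
  have S_sub: "S \<subseteq> fst (l_scan LB Rv dl K (Suc m))"
    using Sb by auto
  show ?case
  proof (cases "K - j < m")
    case True
    then show ?thesis
      using Suc.IH Sb S_sub by auto
  next
    case False
    then have j: "j = K - m"
      using Suc.prems assms(4) by simp
    show ?thesis
    proof (cases "case b of None \<Rightarrow> True | Some bb \<Rightarrow> Rv j < bb / dl")
      case True
      then have "j \<in> fst (l_scan LB Rv dl K (Suc m))"
        using Sb assms(3) unfolding j by simp
      moreover have "Rv j \<le> dl * Rv j"
        using assms(1,2) mult_right_mono[of 1 dl "Rv j"] by simp
      ultimately show ?thesis
        using assms(4) by blast
    next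
      case False
      then obtain bb where b: "b = Some bb" "bb \<le> dl * Rv j"
        using assms(1) by (cases b) (auto simp: field_simps not_less)
      then obtain i where "i \<in> S" "K - m \<le> i" "i \<le> K" "bb = Rv i"
        using l_scan_threshold[of LB Rv dl K m bb] Sb by auto
      then show ?thesis
        using b j S_sub by (intro bexI[of _ i]) auto
    qed
  qed
qed simp

lemma scans_select_index:
  fixes B R :: "nat \<Rightarrow> real"
  assumes "1 \<le> gamma" "1 \<le> delta" "k \<le> K"
    and nonneg: "\<And>i. i \<le> K \<Longrightarrow> 0 \<le> B i \<and> 0 \<le> R i"
    and mono: "\<And>i j. i \<le> j \<Longrightarrow> j \<le> K \<Longrightarrow> B j \<le> B i \<and> R i \<le> R j"
  shows "\<exists>i\<in>L_set (LB_set B gamma K) R delta K. B i \<le> gamma * B k \<and> R i \<le> delta * R k"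
proof -
  have "\<exists>j\<in>LB_set B gamma K. j \<le> k \<and> B j \<le> gamma * B k"
    unfolding LB_set_def using nonneg assms(3)
    by (intro lb_scan_covers[OF assms(1), where Bv = B and k = k and n = "Suc K"]) auto
  then obtain j where j: "j \<in> LB_set B gamma K" "j \<le> k" "B j \<le> gamma * B k"
    by blast
  have "\<exists>i\<in>L_set (LB_set B gamma K) R delta K. j \<le> i \<and> i \<le> K \<and> R i \<le> delta * R j"
    unfolding L_set_def using nonneg j(2) assms(3)
    by (intro l_scan_covers[OF assms(2) _ j(1), where m = "Suc K"]) auto
  then obtain i where i: "i \<in> L_set (LB_set B gamma K) R delta K" "j \<le> i" "i \<le> K"
      "R i \<le> delta * R j"
    by blast
  have "B i \<le> gamma * B k"
    using mono[OF i(2,3)] j(3) by simp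
  moreover have "R i \<le> delta * R k"
    using i(4) mono[of j k] j(2) assms(2,3) by (simp add: mult_left_mono order_trans)
  ultimately show ?thesis
    using i(1) by blast
qed

lemma flow_in_Nats: "flow Dem d r T e \<in> \<nat>"
  unfolding flow_def by (induction Dem rule: infinite_finite_induct) auto

lemma flow_nonneg: "0 \<le> flow Dem d r T e"
  unfolding flow_def by (intro sum_nonneg) auto

lemma costA_eq_capped_cost: "costA Dem d r l eps i S = capped_cost l (flow Dem d r S) (Mof eps i) S"
  unfolding costA_def tcost_def scost_def Acost_def capped_cost_def ..

lemma rent_eq_rent_cost: "rent Dem d r l M S = rent_cost l (flow Dem d r S) M S"
  unfolding rent_def rent_cost_def Acost_def by (rule sum.cong) auto

lemma buy_eq_buy_cost: "buy Dem d r l M S = buy_cost l (flow Dem d r S) M S"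
  unfolding buy_def buy_cost_def ..

lemma costA_eq_rent_buy:
  "finite S \<Longrightarrow>
     costA Dem d r l eps i S = rent Dem d r l (Mof eps i) S + Mof eps i * buy Dem d r l (Mof eps i) S"
  unfolding costA_eq_capped_cost rent_eq_rent_cost buy_eq_buy_cost by (rule capped_cost_split)

lemma rent_nonneg: "\<forall>e\<in>S. 0 \<le> l e \<Longrightarrow> 0 \<le> rent Dem d r l M S"
  unfolding rent_eq_rent_cost by (rule rent_cost_nonneg) (auto simp: flow_nonneg)

lemma buy_nonneg: "\<forall>e\<in>S. 0 \<le> l e \<Longrightarrow> 0 \<le> buy Dem d r l M S"
  unfolding buy_eq_buy_cost by (rule buy_cost_nonneg)

lemma Mof_pos: "0 < eps \<Longrightarrow> 0 < Mof eps i"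
  unfolding Mof_def by simp

lemma Mof_mono: "0 < eps \<Longrightarrow> i \<le> j \<Longrightarrow> Mof eps i \<le> Mof eps j"
  unfolding Mof_def by (rule power_increasing) auto

lemma Mof_less_Suc: "0 < eps \<Longrightarrow> Mof eps i < Mof eps (Suc i)"
  unfolding Mof_def by (rule power_strict_increasing) auto

lemma routing_tree_nonneg_weights:
  "routing_tree E r Dem S \<Longrightarrow> \<forall>e\<in>E. 0 \<le> l e \<Longrightarrow> finite S \<and> (\<forall>e\<in>S. 0 \<le> l e)"
  unfolding routing_tree_def is_tree_def by auto

lemma proc_trees_routing_tree:
  assumes "\<forall>i\<le>Kof Dem d eps. routing_tree E r Dem (T0 i)"
  shows "routing_tree E r Dem (proc_trees Dem d r l eps T0 i)"
proof -
  obtain m where "m \<le> Kof Dem d eps" "proc_trees Dem d r l eps T0 i = T0 m"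
    using final_trees_in_range[of "costA Dem d r l eps" T0 "Kof Dem d eps" i]
    unfolding proc_trees_def by blast
  then show ?thesis
    using assms by simp
qed

lemma proc_trees_rent_buy_monotone:
  assumes "\<forall>i\<le>Kof Dem d eps. routing_tree E r Dem (T0 i)" "\<forall>e\<in>E. 0 \<le> l e" "0 < eps"
    and "i \<le> j" "j \<le> Kof Dem d eps"
  defines "P \<equiv> proc_trees Dem d r l eps T0"
  shows "buy Dem d r l (Mof eps j) (P j) \<le> buy Dem d r l (Mof eps i) (P i)"
    and "rent Dem d r l (Mof eps i) (P i) \<le> rent Dem d r l (Mof eps j) (P j)"
proof -
  have fin: "finite (P m)" and nonneg: "\<forall>e\<in>P m. 0 \<le> l e" for m
    using routing_tree_nonneg_weights[OF proc_trees_routing_tree[OF assms(1)] assms(2)]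
    unfolding P_def by auto
  have adjacent: "buy Dem d r l (Mof eps (Suc m)) (P (Suc m)) \<le> buy Dem d r l (Mof eps m) (P m) \<and>
      rent Dem d r l (Mof eps m) (P m) \<le> rent Dem d r l (Mof eps (Suc m)) (P (Suc m))"
    if "m \<in> {..<Kof Dem d eps}" for m
  proof -
    have "m < Kof Dem d eps"
      using that by simp
    note pair = final_trees_adjacent[OF this, of "costA Dem d r l eps" T0]
    show ?thesis
      unfolding rent_eq_rent_cost buy_eq_buy_cost
      by (intro conjI rent_buy_exchange[OF fin fin nonneg nonneg less_imp_le[OF Mof_pos[OF assms(3)]]
            Mof_less_Suc[OF assms(3)]])
        (use pair in \<open>simp_all add: P_def proc_trees_def costA_eq_capped_cost\<close>)
  qed
  have ivl: "{i..<j} \<subseteq> {..<Kof Dem d eps}"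
    using assms(5) by auto
  show "buy Dem d r l (Mof eps j) (P j) \<le> buy Dem d r l (Mof eps i) (P i)"
    by (rule lift_Suc_antimono_le_ivl[where f = "\<lambda>m. buy Dem d r l (Mof eps m) (P m)", OF _ assms(4) ivl])
      (use adjacent in blast)
  show "rent Dem d r l (Mof eps i) (P i) \<le> rent Dem d r l (Mof eps j) (P j)"
    by (rule lift_Suc_mono_le_ivl[where f = "\<lambda>m. rent Dem d r l (Mof eps m) (P m)", OF _ assms(4) ivl])
      (use adjacent in blast)
qed

text \<open>Integrality of the demands enters here: a nonzero flow is at least \<open>1 = M\<^sub>0\<close>.\<close>

lemma Acost_le_scaled_Acost_1:
  assumes "x \<in> \<nat>" "0 \<le> M"
  shows "Acost M x \<le> M * Acost 1 x"
  using assms(1)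
proof (cases rule: Nats_cases)
  case (of_nat n)
  then show ?thesis
    using assms(2) unfolding Acost_def by (cases n) auto
qed

lemma costA_le_partition_costs:
  assumes "finite T" "\<forall>e\<in>T. 0 \<le> l e" "0 < eps" "k \<le> K" "TB \<union> TR = T" "TB \<inter> TR = {}"
  shows "costA Dem d r l eps k T \<le>
           Mof eps k * scost Dem d r l (Acost (Mof eps 0)) T TB + scost Dem d r l (Acost (Mof eps K)) T TR"
proof -
  let ?x = "flow Dem d r T"
  have fin: "finite TB" "finite TR"
    using assms(1,5) by (auto intro: finite_subset)
  have "costA Dem d r l eps k T =
          scost Dem d r l (Acost (Mof eps k)) T TB + scost Dem d r l (Acost (Mof eps k)) T TR"
    unfolding costA_def tcost_def scost_def using sum.union_disjoint[OF fin assms(6)] assms(5) by simp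
  also have "scost Dem d r l (Acost (Mof eps k)) T TB \<le> Mof eps k * scost Dem d r l (Acost (Mof eps 0)) T TB"
    unfolding scost_def sum_distrib_left
  proof (rule sum_mono)
    fix e assume "e \<in> TB"
    then have "l e * Acost (Mof eps k) (?x e) \<le> l e * (Mof eps k * Acost 1 (?x e))"
      using assms(2,5) Acost_le_scaled_Acost_1[OF flow_in_Nats less_imp_le[OF Mof_pos[OF assms(3)]]]
      by (intro mult_left_mono) auto
    then show "l e * Acost (Mof eps k) (?x e) \<le> Mof eps k * (l e * Acost (Mof eps 0) (?x e))"
      by (simp add: Mof_def algebra_simps)
  qed
  also have "scost Dem d r l (Acost (Mof eps k)) T TR \<le> scost Dem d r l (Acost (Mof eps K)) T TR"
    unfolding scost_def Acost_def
    using assms(2,5) Mof_mono[OF assms(3,4)] by (intro sum_mono mult_left_mono) auto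
  finally show ?thesis
    by simp
qed

lemma rounded_cost_le_max_scaled:
  fixes cB cR gamma delta M X Y Bi Bk Ri Rk muR muB nuR nuB :: real
  assumes "0 \<le> cB" "0 \<le> cR" "0 \<le> gamma" "0 \<le> delta" "0 \<le> M" "0 \<le> X" "0 \<le> Y"
    and "Bi \<le> gamma * Bk" "Ri \<le> delta * Rk"
    and "Rk \<le> muR * X + muB * Y" "M * Bk \<le> nuR * X + nuB * Y"
  shows "M * (cB * Bi) + cR * Ri \<le>
           max (cR * delta * muR + cB * gamma * nuR) (cR * delta * muB + cB * gamma * nuB) * (X + Y)"
proof -
  let ?a = "cR * delta * muR + cB * gamma * nuR" and ?b = "cR * delta * muB + cB * gamma * nuB"
  have "M * (cB * Bi) + cR * Ri \<le> (cB * M) * (gamma * Bk) + cR * (delta * Rk)"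
    using mult_left_mono[OF assms(8) mult_nonneg_nonneg[OF assms(1,5)]] mult_left_mono[OF assms(9,2)]
    by (simp add: mult_ac)
  also have "\<dots> = (cB * gamma) * (M * Bk) + (cR * delta) * Rk"
    by (simp add: mult_ac)
  also have "\<dots> \<le> (cB * gamma) * (nuR * X + nuB * Y) + (cR * delta) * (muR * X + muB * Y)"
    using assms by (intro add_mono mult_left_mono) auto
  also have "\<dots> = ?a * X + ?b * Y"
    by (simp add: algebra_simps)
  also have "\<dots> \<le> max ?a ?b * X + max ?a ?b * Y"
    using assms(6,7) by (intro add_mono mult_right_mono) auto
  finally show ?thesis
    by (simp add: distrib_left)
qed

theorem corollary6:
  fixes V :: "'a set" and E :: "'a set set" and l :: "'a set \<Rightarrow> real" and r :: 'a
    and Dem :: "'a set" and d :: "'a \<Rightarrow> nat"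
    and eps gamma delta :: real
    and T0 Tstar :: "nat \<Rightarrow> 'a set set" and T :: "'a set set"
    and cB cR muR muB nuR nuB :: real
  assumes "finite V" and "E \<subseteq> {{u, v} | u v. u \<in> V \<and> v \<in> V \<and> u \<noteq> v}"
    and "\<forall>e\<in>E. 0 \<le> l e" and "r \<in> V" and "Dem \<subseteq> V" and "Dem \<noteq> {}"
    and "\<forall>v\<in>Dem. 0 < d v"
    and "0 < eps" and "1 < gamma" and "1 < delta"
  defines "K \<equiv> Kof Dem d eps"
    and "R \<equiv> (\<lambda>i. rent Dem d r l (Mof eps i) (proc_trees Dem d r l eps T0 i))"
    and "B \<equiv> (\<lambda>i. buy Dem d r l (Mof eps i) (proc_trees Dem d r l eps T0 i))"
    and "Rs \<equiv> (\<lambda>i. rent Dem d r l (Mof eps i) (Tstar i))"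
    and "Bs \<equiv> (\<lambda>i. buy Dem d r l (Mof eps i) (Tstar i))"
    and "LB \<equiv> LB_set (\<lambda>i. buy Dem d r l (Mof eps i) (proc_trees Dem d r l eps T0 i))
                      gamma (Kof Dem d eps)"
  assumes "\<forall>i\<le>K. routing_tree E r Dem (Tstar i) \<and>
              (\<forall>S. routing_tree E r Dem S \<longrightarrow> costA Dem d r l eps i (Tstar i) \<le> costA Dem d r l eps i S)"
    and "\<forall>i\<le>K. routing_tree E r Dem (T0 i)"
    and "routing_tree E r Dem T"
    and "0 \<le> cB" and "0 \<le> cR"
    and "\<forall>i\<in>L_set LB R delta K. \<exists>TB TR. TB \<union> TR = T \<and> TB \<inter> TR = {} \<and>
            scost Dem d r l (Acost (Mof eps 0)) T TB \<le> cB * B i \<and>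
            scost Dem d r l (Acost (Mof eps K)) T TR \<le> cR * R i"
    and "\<forall>i\<le>K. R i \<le> muR * Rs i + muB * Mof eps i * Bs i \<and>
              Mof eps i * B i \<le> nuR * Rs i + nuB * Mof eps i * Bs i"
  shows "\<forall>k\<le>K. costA Dem d r l eps k T \<le> max (cR * delta * muR + cB * gamma * nuR)
                                (cR * delta * muB + cB * gamma * nuB) * costA Dem d r l eps k (Tstar k)"
proof (intro allI impI)
  fix k assume "k \<le> K"
  let ?Mk = "Mof eps k"
  have Mk: "0 \<le> ?Mk"
    using Mof_pos[OF \<open>0 < eps\<close>] by (rule less_imp_le)
  note T0_trees = \<open>\<forall>i\<le>K. routing_tree E r Dem (T0 i)\<close>[unfolded K_def]
  have nonneg: "0 \<le> B i \<and> 0 \<le> R i" for i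
    using routing_tree_nonneg_weights[OF proc_trees_routing_tree[OF T0_trees] \<open>\<forall>e\<in>E. 0 \<le> l e\<close>]
    unfolding B_def R_def by (simp add: rent_nonneg buy_nonneg)
  have mono: "B j \<le> B i \<and> R i \<le> R j" if "i \<le> j" "j \<le> K" for i j
    using proc_trees_rent_buy_monotone[OF T0_trees \<open>\<forall>e\<in>E. 0 \<le> l e\<close> \<open>0 < eps\<close> that[unfolded K_def]]
    unfolding B_def R_def by blast
  have "LB = LB_set B gamma K"
    unfolding LB_def B_def K_def ..
  then obtain i where i: "i \<in> L_set LB R delta K" "B i \<le> gamma * B k" "R i \<le> delta * R k"
    using scans_select_index[of gamma delta k K B R] \<open>1 < gamma\<close> \<open>1 < delta\<close> \<open>k \<le> K\<close> nonneg mono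
    by auto
  then obtain TB TR where part: "TB \<union> TR = T" "TB \<inter> TR = {}"
      "scost Dem d r l (Acost (Mof eps 0)) T TB \<le> cB * B i"
      "scost Dem d r l (Acost (Mof eps K)) T TR \<le> cR * R i"
    using bspec[OF assms(22) i(1)] by (elim exE conjE) blast
  have T: "finite T" "\<forall>e\<in>T. 0 \<le> l e" and Tk: "finite (Tstar k)" "\<forall>e\<in>Tstar k. 0 \<le> l e"
    using routing_tree_nonneg_weights[OF \<open>routing_tree E r Dem T\<close> \<open>\<forall>e\<in>E. 0 \<le> l e\<close>]
      routing_tree_nonneg_weights[OF _ \<open>\<forall>e\<in>E. 0 \<le> l e\<close>, of r Dem "Tstar k"] assms(17) \<open>k \<le> K\<close>
    by blast+
  have "costA Dem d r l eps k T \<le> ?Mk * (cB * B i) + cR * R i"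
    using costA_le_partition_costs[OF T \<open>0 < eps\<close> \<open>k \<le> K\<close> part(1,2), of Dem d r] part(4)
      mult_left_mono[OF part(3) Mk] by linarith
  also have "\<dots> \<le> max (cR * delta * muR + cB * gamma * nuR) (cR * delta * muB + cB * gamma * nuB)
                  * (Rs k + ?Mk * Bs k)"
  proof (rule rounded_cost_le_max_scaled)
    show "0 \<le> Rs k" "0 \<le> ?Mk * Bs k"
      using Tk(2) Mk unfolding Rs_def Bs_def by (simp_all add: rent_nonneg buy_nonneg)
    show "R k \<le> muR * Rs k + muB * (?Mk * Bs k)" "?Mk * B k \<le> nuR * Rs k + nuB * (?Mk * Bs k)"
      using assms(23) \<open>k \<le> K\<close> by (simp_all add: mult.assoc)
  qed (use i(2,3) Mk \<open>0 \<le> cB\<close> \<open>0 \<le> cR\<close> \<open>1 < gamma\<close> \<open>1 < delta\<close> in auto)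
  also have "Rs k + ?Mk * Bs k = costA Dem d r l eps k (Tstar k)"
    unfolding Rs_def Bs_def using costA_eq_rent_buy[OF Tk(1)] by simp
  finally show "costA Dem d r l eps k T \<le> max (cR * delta * muR + cB * gamma * nuR)
      (cR * delta * muB + cB * gamma * nuB) * costA Dem d r l eps k (Tstar k)" .
qed

end
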